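(* Let $Q$ be a quantale, $M$ a shrinkable $Q$-module and $\mathcal{F},\mathcal{G}\in\operatorname{mF}(Q)$. For $a,b\in M$ and $n,m\in\mathbb{N}$ (with $n,m\ge1$), if $a\preceq^n_\mathcal{F}b$ and $a\preceq^m_\mathcal{G}b$, then $a\preceq^{n+m-1}_{\mathcal{F}\cap\mathcal{G}}b$.
   Context: A quantale is a poset $Q$ in which every nonempty subset has a join $\sum$ (binary join $a+b$; no bottom required), with top $1$ and a commutative associative multiplication with unit $1$ distributing over nonempty joins. A $Q$-module is a poset $M$ with all nonempty joins and an associative unital action $Q\times M\to M$ distributing over nonempty joins in each variable. A multiplicative filter (m-filter) is a subset $\mathcal{F}\subseteq Q$ containing $1$, upward closed and closed under multiplication; $\operatorname{mF}(Q)$ is the set of m-filters. For $x,x_i$ write $x\le^*\sum_{i\in I}x_i$ if $x\le\sum_{i\in I_0}x_i$ for some finite nonempty $I_0\subseteq I$. $M$ is shrinkable if whenever $x\le\sum_{i\in I}x_i$ in $M$ there is a family $(y_j)_{j\in J}$ with $x=\sum_jy_j$ and $y_j\le^*\sum_ix_i$ for all $j$. For $a,b\in M$, $a\preceq^1_\mathcal{F}b$ means there are families $(a_i)_{i\in I}$ in $M$ and $(s_i)_{i\in I}$ in $\mathcal{F}$ with $a\le\sum_ia_i$ and $s_ia_i\le b$ for all $i$; $a\preceq^n_\mathcal{F}b$ ($n\ge1$) means there exist $c_1,\dots,c_{n-1}\in M$ with $a\preceq^1_\mathcal{F}c_1\preceq^1_\mathcal{F}\cdots\preceq^1_\mathcal{F}c_{n-1}\preceq^1_\mathcal{F}b$.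 *)

theory Defs
  imports Main
begin

definition is_lub :: "'a::order set \<Rightarrow> 'a \<Rightarrow> bool" where
  "is_lub A x \<longleftrightarrow> (\<forall>y\<in>A. y \<le> x) \<and> (\<forall>z. (\<forall>y\<in>A. y \<le> z) \<longrightarrow> x \<le> z)"

definition ne_joins :: "'a::order itself \<Rightarrow> bool" where
  "ne_joins (_::'a itself) \<longleftrightarrow> (\<forall>A::'a set. A \<noteq> {} \<longrightarrow> (\<exists>x. is_lub A x))"

definition Join :: "'a::order set \<Rightarrow> 'a" where
  "Join A = (THE x. is_lub A x)"

text \<open>The quantale is the whole type 'q with its order, multiplication mul and unit one.\<close>
definition quantale :: "('q::order \<Rightarrow> 'q \<Rightarrow> 'q) \<Rightarrow> 'q \<Rightarrow> bool" where
  "quantale mul one \<longleftrightarrow>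
     ne_joins TYPE('q) \<and>
     (\<forall>x. x \<le> one) \<and>
     (\<forall>x y. mul x y = mul y x) \<and>
     (\<forall>x y z. mul (mul x y) z = mul x (mul y z)) \<and>
     (\<forall>x. mul one x = x) \<and>
     (\<forall>a A. A \<noteq> {} \<longrightarrow> mul a (Join A) = Join (mul a ` A))"

definition qmodule :: "('q::order \<Rightarrow> 'q \<Rightarrow> 'q) \<Rightarrow> 'q \<Rightarrow> ('q \<Rightarrow> 'm::order \<Rightarrow> 'm) \<Rightarrow> bool" where
  "qmodule mul one act \<longleftrightarrow>
     ne_joins TYPE('m) \<and>
     (\<forall>r s x. act (mul r s) x = act r (act s x)) \<and>
     (\<forall>x. act one x = x) \<and>
     (\<forall>r A. A \<noteq> {} \<longrightarrow> act r (Join A) = Join (act r ` A)) \<and>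
     (\<forall>R x. R \<noteq> {} \<longrightarrow> act (Join R) x = Join ((\<lambda>r. act r x) ` R))"

definition mfilter :: "('q::order \<Rightarrow> 'q \<Rightarrow> 'q) \<Rightarrow> 'q \<Rightarrow> 'q set \<Rightarrow> bool" where
  "mfilter mul one F \<longleftrightarrow>
     one \<in> F \<and> (\<forall>x y. x \<in> F \<longrightarrow> x \<le> y \<longrightarrow> y \<in> F) \<and> (\<forall>x\<in>F. \<forall>y\<in>F. mul x y \<in> F)"

text \<open>x \<le>* \<Sum> X : x is below the join of some finite nonempty subfamily.
  Families are represented by their (nonempty) sets of members.\<close>
definition le_star :: "'a::order \<Rightarrow> 'a set \<Rightarrow> bool" where
  "le_star x X \<longleftrightarrow> (\<exists>X0. X0 \<subseteq> X \<and> finite X0 \<and> X0 \<noteq> {} \<and> x \<le> Join X0)"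

definition shrinkable :: "'m::order itself \<Rightarrow> bool" where
  "shrinkable (_::'m itself) \<longleftrightarrow>
     (\<forall>(x::'m) X. X \<noteq> {} \<longrightarrow> x \<le> Join X \<longrightarrow>
        (\<exists>Y. Y \<noteq> {} \<and> x = Join Y \<and> (\<forall>y\<in>Y. le_star y X)))"

text \<open>A family (a_i, s_i)_{i\<in>I} (I nonempty, since only nonempty joins exist) is
  represented by the nonempty set S of pairs (a_i, s_i).\<close>
definition prec1 :: "('q::order \<Rightarrow> 'm::order \<Rightarrow> 'm) \<Rightarrow> 'q set \<Rightarrow> 'm \<Rightarrow> 'm \<Rightarrow> bool" where
  "prec1 act F a b \<longleftrightarrow>
     (\<exists>S::('m \<times> 'q) set. S \<noteq> {} \<and> snd ` S \<subseteq> F \<and> a \<le> Join (fst ` S) \<and>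
        (\<forall>(x, s)\<in>S. act s x \<le> b))"

fun precn :: "('q::order \<Rightarrow> 'm::order \<Rightarrow> 'm) \<Rightarrow> 'q set \<Rightarrow> nat \<Rightarrow> 'm \<Rightarrow> 'm \<Rightarrow> bool" where
  "precn act F 0 a b = False"
| "precn act F (Suc 0) a b = prec1 act F a b"
| "precn act F (Suc (Suc n)) a b = (\<exists>c. prec1 act F a c \<and> precn act F (Suc n) c b)"

end

theory Submission
  imports Defs
begin

text \<open>
  Induction on \<open>n + m\<close>. Peel off the first steps \<open>a \<preceq>\<^sup>1\<^sub>F c\<close> and
  \<open>a \<preceq>\<^sup>1\<^sub>G d\<close>. Since an m-filter is closed under products and \<open>s t y \<le> s y, t y\<close>,
  the elements \<open>y\<close> with \<open>s y \<le> c\<close> for some \<open>s \<in> F\<close> are closed under finite joins;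
  shrinkability therefore refines both covers of \<open>a\<close> into a single decomposition
  \<open>a = \<Sum>\<^sub>y y\<close> with \<open>s\<^sub>y y \<le> c\<close>, \<open>t\<^sub>y y \<le> d\<close>, \<open>s\<^sub>y \<in> F\<close>, \<open>t\<^sub>y \<in> G\<close>.
  Put \<open>e = \<Sum>\<^sub>y (s\<^sub>y y + t\<^sub>y y)\<close>; the scalars \<open>s\<^sub>y + t\<^sub>y \<in> F \<inter> G\<close> witness
  \<open>a \<preceq>\<^sup>1\<^sub>F\<^sub>\<inter>\<^sub>G e\<close>. Each summand \<open>s\<^sub>y y\<close> lies below \<open>c\<close> and below \<open>a\<close>, hence satisfies
  \<open>\<preceq>\<^sup>n\<^sup>-\<^sup>1\<^sub>F b\<close> and \<open>\<preceq>\<^sup>m\<^sub>G b\<close>, and the induction hypothesis yields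
  \<open>\<preceq>\<^sup>n\<^sup>+\<^sup>m\<^sup>-\<^sup>2\<^sub>F\<^sub>\<inter>\<^sub>G b\<close>; symmetrically for \<open>t\<^sub>y y\<close>. As this relation is stable under
  joins, \<open>e \<preceq>\<^sup>n\<^sup>+\<^sup>m\<^sup>-\<^sup>2\<^sub>F\<^sub>\<inter>\<^sub>G b\<close>.
\<close>

lemma Join_is_lub:
  assumes "ne_joins TYPE('a::order)" "A \<noteq> {}"
  shows "is_lub (A::'a set) (Join A)"
proof -
  from assms obtain x where x: "is_lub A x" unfolding ne_joins_def by blast
  have "y = x" if "is_lub A y" for y
    using that x unfolding is_lub_def by (blast intro: antisym)
  then show ?thesis unfolding Join_def using theI[of "is_lub A" x] x by blast
qed

lemma Join_upper:
  assumes "ne_joins TYPE('a::order)" "x \<in> A"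
  shows "x \<le> Join (A::'a set)"
  using Join_is_lub[OF assms(1), of A] assms(2) unfolding is_lub_def by blast

lemma Join_least:
  assumes "ne_joins TYPE('a::order)" "A \<noteq> {}" "\<And>x. x \<in> A \<Longrightarrow> x \<le> z"
  shows "Join (A::'a set) \<le> z"
  using Join_is_lub[OF assms(1,2)] assms(3) unfolding is_lub_def by blast

lemma Join_eq_greatest:
  assumes "ne_joins TYPE('a::order)" "y \<in> A" "\<And>x. x \<in> A \<Longrightarrow> x \<le> y"
  shows "Join (A::'a set) = y"
  using Join_least[OF assms(1)] Join_upper[OF assms(1,2)] assms(2,3) by (blast intro: antisym)

lemma Join_UN:
  assumes "ne_joins TYPE('a::order)" "X \<noteq> {}" "\<And>x. x \<in> X \<Longrightarrow> Z x \<noteq> {}"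
  shows "Join (\<Union>x\<in>X. Z x :: 'a set) = Join ((\<lambda>x. Join (Z x)) ` X)"
proof (rule antisym)
  show "Join (\<Union>x\<in>X. Z x) \<le> Join ((\<lambda>x. Join (Z x)) ` X)"
  proof (rule Join_least[OF assms(1)])
    show "(\<Union>x\<in>X. Z x) \<noteq> {}" using assms(2,3) by blast
    fix z assume "z \<in> (\<Union>x\<in>X. Z x)"
    then obtain x where x: "x \<in> X" "z \<in> Z x" by blast
    have "z \<le> Join (Z x)" using x(2) by (rule Join_upper[OF assms(1)])
    also have "\<dots> \<le> Join ((\<lambda>x. Join (Z x)) ` X)"
      using x(1) by (intro Join_upper[OF assms(1)]) simp
    finally show "z \<le> Join ((\<lambda>x. Join (Z x)) ` X)" .
  qed
  show "Join ((\<lambda>x. Join (Z x)) ` X) \<le> Join (\<Union>x\<in>X. Z x)"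
  proof (rule Join_least[OF assms(1)])
    show "(\<lambda>x. Join (Z x)) ` X \<noteq> {}" using assms(2) by blast
    fix w assume "w \<in> (\<lambda>x. Join (Z x)) ` X"
    then obtain x where x: "x \<in> X" "w = Join (Z x)" by blast
    have "Join (Z x) \<le> Join (\<Union>x\<in>X. Z x)"
      using x(1) by (intro Join_least[OF assms(1) assms(3)] Join_upper[OF assms(1)]) auto
    then show "w \<le> Join (\<Union>x\<in>X. Z x)" using x(2) by simp
  qed
qed

definition scaled_le :: "('q \<Rightarrow> 'm::order \<Rightarrow> 'm) \<Rightarrow> 'q set \<Rightarrow> 'm \<Rightarrow> 'm \<Rightarrow> bool" where
  "scaled_le act F y b \<longleftrightarrow> (\<exists>s\<in>F. act s y \<le> b)"

lemma scaled_le_mono: "scaled_le act F y b \<Longrightarrow> b \<le> b' \<Longrightarrow> scaled_le act F y b'"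
  unfolding scaled_le_def by (blast intro: order_trans)

lemma prec1_iff_scaled_le:
  "prec1 act F a b \<longleftrightarrow> (\<exists>Y. Y \<noteq> {} \<and> a \<le> Join Y \<and> (\<forall>y\<in>Y. scaled_le act F y b))"
proof
  assume "prec1 act F a b"
  then obtain S where "S \<noteq> {}" "snd ` S \<subseteq> F" "a \<le> Join (fst ` S)" "\<forall>(x, s)\<in>S. act s x \<le> b"
    unfolding prec1_def by blast
  then show "\<exists>Y. Y \<noteq> {} \<and> a \<le> Join Y \<and> (\<forall>y\<in>Y. scaled_le act F y b)"
    unfolding scaled_le_def by (intro exI[of _ "fst ` S"]) force
next
  assume "\<exists>Y. Y \<noteq> {} \<and> a \<le> Join Y \<and> (\<forall>y\<in>Y. scaled_le act F y b)"
  then obtain Y s where Y: "Y \<noteq> {}" "a \<le> Join Y" and s: "\<forall>y\<in>Y. s y \<in> F \<and> act (s y) y \<le> b"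
    unfolding scaled_le_def by metis
  have "fst ` (\<lambda>y. (y, s y)) ` Y = Y" by force
  then show "prec1 act F a b"
    unfolding prec1_def using Y s by (intro exI[of _ "(\<lambda>y. (y, s y)) ` Y"]) auto
qed

lemma prec1_mono: "prec1 act F a b \<Longrightarrow> b \<le> b' \<Longrightarrow> prec1 act F a b'"
  unfolding prec1_iff_scaled_le by (meson scaled_le_mono)

lemma prec1_antimono: "a' \<le> a \<Longrightarrow> prec1 act F a b \<Longrightarrow> prec1 act F a' b"
  unfolding prec1_iff_scaled_le by (meson order_trans)

text \<open>
  \<open>a \<preceq>\<^sup>k\<^sub>F b\<close> with \<open>\<preceq>\<^sup>0\<^sub>F\<close> read as \<open>\<le>\<close> (whereas \<^const>\<open>precn\<close> is empty at \<open>0\<close>):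
  then \<open>\<preceq>\<^sup>k\<^sup>+\<^sup>1 = \<preceq>\<^sup>1 \<circ> \<preceq>\<^sup>k\<close> holds for all \<open>k\<close>, and the theorem holds for all \<open>n, m\<close>.
\<close>
definition prec_le :: "('q::order \<Rightarrow> 'm::order \<Rightarrow> 'm) \<Rightarrow> 'q set \<Rightarrow> nat \<Rightarrow> 'm \<Rightarrow> 'm \<Rightarrow> bool" where
  "prec_le act F k a b \<longleftrightarrow> (if k = 0 then a \<le> b else precn act F k a b)"

lemma prec_le_0 [simp]: "prec_le act F 0 a b \<longleftrightarrow> a \<le> b"
  by (simp add: prec_le_def)

lemma precn_eq_prec_le: "k \<ge> 1 \<Longrightarrow> precn act F k a b \<longleftrightarrow> prec_le act F k a b"
  by (simp add: prec_le_def)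

lemma prec_le_Suc: "prec_le act F (Suc k) a b \<longleftrightarrow> (\<exists>c. prec1 act F a c \<and> prec_le act F k c b)"
proof (cases k)
  case 0
  then show ?thesis by (auto simp: prec_le_def intro: prec1_mono)
next
  case (Suc j)
  then show ?thesis by (simp add: prec_le_def)
qed

locale quantale_module =
  fixes mul :: "'q::order \<Rightarrow> 'q \<Rightarrow> 'q" and one :: 'q
    and act :: "'q \<Rightarrow> 'm::order \<Rightarrow> 'm"
  assumes quantale: "quantale mul one" and qmodule: "qmodule mul one act"
begin

lemma joins_scalars: "ne_joins TYPE('q)"
  using quantale unfolding quantale_def by (elim conjE) simp

lemma joins_module: "ne_joins TYPE('m)"
  using qmodule unfolding qmodule_def by (elim conjE) simp

lemma le_one: "r \<le> one"
  using quantale unfolding quantale_def by (elim conjE) simp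

lemma mul_commute: "mul r s = mul s r"
  using quantale unfolding quantale_def by (elim conjE) simp

lemma act_mul: "act (mul r s) x = act r (act s x)"
  using qmodule unfolding qmodule_def by (elim conjE) simp

lemma act_one: "act one x = x"
  using qmodule unfolding qmodule_def by (elim conjE) simp

lemma act_Join_right: "A \<noteq> {} \<Longrightarrow> act r (Join A) = Join (act r ` A)"
  using qmodule unfolding qmodule_def by (elim conjE) simp

lemma act_Join_left: "R \<noteq> {} \<Longrightarrow> act (Join R) x = Join ((\<lambda>r. act r x) ` R)"
  using qmodule unfolding qmodule_def by (elim conjE) simp

lemma act_mono_right:
  assumes "x \<le> y" shows "act r x \<le> act r y"
proof -
  have "act r x \<le> Join {act r x, act r y}" by (rule Join_upper[OF joins_module]) simp
  also have "\<dots> = act r (Join {x, y})" by (simp add: act_Join_right)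
  also have "Join {x, y} = y" by (rule Join_eq_greatest[OF joins_module]) (use assms in auto)
  finally show ?thesis .
qed

lemma act_mono_left:
  assumes "r \<le> s" shows "act r x \<le> act s x"
proof -
  have "act r x \<le> Join {act r x, act s x}" by (rule Join_upper[OF joins_module]) simp
  also have "\<dots> = act (Join {r, s}) x" by (simp add: act_Join_left)
  also have "Join {r, s} = s" by (rule Join_eq_greatest[OF joins_scalars]) (use assms in auto)
  finally show ?thesis .
qed

lemma act_le: "act r x \<le> x"
  using act_mono_left[OF le_one, of r x] by (simp add: act_one)

lemma act_mul_le_left: "act (mul r s) x \<le> act r x"
  using act_le[of s "act r x"] by (simp add: mul_commute[of r s] act_mul)

lemma act_mul_le_right: "act (mul r s) x \<le> act s x"
  using act_le[of r "act s x"] by (simp add: act_mul)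

lemma scaled_le_antimono: "scaled_le act F y b \<Longrightarrow> z \<le> y \<Longrightarrow> scaled_le act F z b"
  unfolding scaled_le_def by (meson act_mono_right order_trans)

lemma scaled_le_finite_uniform:
  assumes F: "mfilter mul one F" and "finite X" "X \<noteq> {}"
    and "\<forall>x\<in>X. scaled_le act F x b"
  shows "\<exists>s\<in>F. \<forall>x\<in>X. act s x \<le> b"
  using assms(2-4)
proof (induction X rule: finite_ne_induct)
  case (singleton x)
  then show ?case unfolding scaled_le_def by auto
next
  case (insert x X)
  then obtain s where s: "s \<in> F" "\<forall>y\<in>X. act s y \<le> b" by auto
  from insert obtain t where t: "t \<in> F" "act t x \<le> b" unfolding scaled_le_def by auto
  have "mul s t \<in> F" using F s t unfolding mfilter_def by blast
  moreover have "act (mul s t) x \<le> b" using act_mul_le_right t order_trans by blast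
  moreover have "\<forall>y\<in>X. act (mul s t) y \<le> b" using act_mul_le_left s order_trans by blast
  ultimately show ?case by blast
qed

lemma scaled_le_finite_Join:
  assumes F: "mfilter mul one F" and X: "finite X" "X \<noteq> {}"
    and "\<forall>x\<in>X. scaled_le act F x b"
  shows "scaled_le act F (Join X) b"
proof -
  obtain s where s: "s \<in> F" "\<forall>x\<in>X. act s x \<le> b"
    using scaled_le_finite_uniform[OF assms] by blast
  have "act s (Join X) = Join (act s ` X)" using act_Join_right X by blast
  also have "\<dots> \<le> b" using Join_least[OF joins_module, of "act s ` X"] s X by blast
  finally show ?thesis using s unfolding scaled_le_def by blast
qed

lemma scaled_le_le_star:
  assumes "mfilter mul one F" and "le_star y X" and "\<forall>x\<in>X. scaled_le act F x b"
  shows "scaled_le act F y b"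
  using assms scaled_le_finite_Join[OF assms(1)] scaled_le_antimono
  unfolding le_star_def by (metis subsetD)

lemma scaled_le_Int:
  assumes F: "mfilter mul one F" and G: "mfilter mul one G"
    and "s \<in> F" "act s y \<le> e" and "t \<in> G" "act t y \<le> e"
  shows "scaled_le act (F \<inter> G) y e"
proof -
  have "s \<le> Join {s, t}" "t \<le> Join {s, t}" using Join_upper[OF joins_scalars] by auto
  then have "Join {s, t} \<in> F \<inter> G" using assms unfolding mfilter_def by blast
  moreover have "act (Join {s, t}) y = Join {act s y, act t y}" by (simp add: act_Join_left)
  moreover have "Join {act s y, act t y} \<le> e"
    using Join_least[OF joins_module, of "{act s y, act t y}"] assms by auto
  ultimately show ?thesis unfolding scaled_le_def by metis
qed

lemma prec1_refl:
  assumes "one \<in> F" "a \<le> b" shows "prec1 act F a b"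
proof -
  have "scaled_le act F a b" using assms act_one unfolding scaled_le_def by metis
  moreover have "a \<le> Join {a}" by (rule Join_upper[OF joins_module]) simp
  ultimately show ?thesis unfolding prec1_iff_scaled_le by blast
qed

lemma prec1_Join:
  assumes "X \<noteq> {}" "\<forall>x\<in>X. prec1 act F x b"
  shows "prec1 act F (Join X) b"
proof -
  obtain Z where Z: "\<forall>x\<in>X. Z x \<noteq> {} \<and> x \<le> Join (Z x) \<and> (\<forall>y\<in>Z x. scaled_le act F y b)"
    using assms(2) unfolding prec1_iff_scaled_le by metis
  have "x \<le> Join ((\<lambda>x. Join (Z x)) ` X)" if "x \<in> X" for x
  proof -
    have "x \<le> Join (Z x)" using Z that by blast
    also have "\<dots> \<le> Join ((\<lambda>x. Join (Z x)) ` X)"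
      using that by (intro Join_upper[OF joins_module]) simp
    finally show ?thesis .
  qed
  then have "Join X \<le> Join ((\<lambda>x. Join (Z x)) ` X)" by (intro Join_least[OF joins_module assms(1)])
  also have "\<dots> = Join (\<Union>x\<in>X. Z x)" using Join_UN[OF joins_module assms(1)] Z by simp
  finally have "Join X \<le> Join (\<Union>x\<in>X. Z x)" .
  moreover have "(\<Union>x\<in>X. Z x) \<noteq> {}" using assms(1) Z by blast
  moreover have "\<forall>y\<in>(\<Union>x\<in>X. Z x). scaled_le act F y b" using Z by blast
  ultimately show ?thesis unfolding prec1_iff_scaled_le by blast
qed

lemma prec_le_antimono: "a' \<le> a \<Longrightarrow> prec_le act F k a b \<Longrightarrow> prec_le act F k a' b"
  by (cases k) (auto simp: prec_le_Suc intro: prec1_antimono order_trans)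

lemma prec_le_refl: "one \<in> F \<Longrightarrow> a \<le> b \<Longrightarrow> prec_le act F k a b"
  by (induction k) (auto simp: prec_le_Suc intro: prec1_refl)

lemma prec_le_Join:
  "X \<noteq> {} \<Longrightarrow> \<forall>x\<in>X. prec_le act F k x b \<Longrightarrow> prec_le act F k (Join X) b"
proof (induction k arbitrary: X)
  case 0
  then show ?case by (simp add: Join_least[OF joins_module])
next
  case (Suc k)
  have "\<forall>x\<in>X. \<exists>c. prec1 act F x c \<and> prec_le act F k c b"
    using Suc.prems(2) by (simp add: prec_le_Suc)
  then obtain c where c: "\<forall>x\<in>X. prec1 act F x (c x) \<and> prec_le act F k (c x) b"
    by metis
  have "prec1 act F x (Join (c ` X))" if "x \<in> X" for x
    using c that Join_upper[OF joins_module, of "c x" "c ` X"] by (blast intro: prec1_mono)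
  then have "prec1 act F (Join X) (Join (c ` X))" using prec1_Join[OF Suc.prems(1)] by blast
  moreover have "prec_le act F k (Join (c ` X)) b"
    using Suc.IH[of "c ` X"] Suc.prems(1) c by blast
  ultimately show ?case unfolding prec_le_Suc by blast
qed

end

locale shrinkable_quantale_module = quantale_module mul one act
  for mul :: "'q::order \<Rightarrow> 'q \<Rightarrow> 'q" and one :: 'q and act :: "'q \<Rightarrow> 'm::order \<Rightarrow> 'm" +
  assumes shrinkable: "shrinkable TYPE('m)"
begin

lemma prec1_shrink:
  assumes "mfilter mul one F" "prec1 act F a c"
  shows "\<exists>Y. Y \<noteq> {} \<and> a = Join Y \<and> (\<forall>y\<in>Y. scaled_le act F y c)"
proof -
  obtain X where X: "X \<noteq> {}" "a \<le> Join X" "\<forall>x\<in>X. scaled_le act F x c"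
    using assms(2) unfolding prec1_iff_scaled_le by blast
  obtain Y where Y: "Y \<noteq> {}" "a = Join Y" "\<forall>y\<in>Y. le_star y X"
    using shrinkable[unfolded shrinkable_def, rule_format, OF X(1,2)] by blast
  have "scaled_le act F y c" if "y \<in> Y" for y
    using scaled_le_le_star[OF assms(1)] Y(3) X(3) that by blast
  then show ?thesis using Y(1,2) by blast
qed

lemma prec1_common_refinement:
  assumes F: "mfilter mul one F" and G: "mfilter mul one G"
    and "prec1 act F a c" and "prec1 act G a d"
  shows "\<exists>Y. Y \<noteq> {} \<and> a = Join Y \<and> (\<forall>y\<in>Y. scaled_le act F y c \<and> scaled_le act G y d)"
proof -
  obtain X where X: "X \<noteq> {}" "a = Join X" "\<forall>x\<in>X. scaled_le act F x c"
    using prec1_shrink[OF F assms(3)] by blast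
  have "prec1 act G x d" if "x \<in> X" for x
    using prec1_antimono[OF _ assms(4)] Join_upper[OF joins_module that] X(2) by simp
  then have "\<forall>x\<in>X. \<exists>Z. Z \<noteq> {} \<and> x = Join Z \<and> (\<forall>z\<in>Z. scaled_le act G z d)"
    using prec1_shrink[OF G] by blast
  then obtain Z where Z: "\<forall>x\<in>X. Z x \<noteq> {} \<and> x = Join (Z x) \<and> (\<forall>z\<in>Z x. scaled_le act G z d)"
    by metis
  have "(\<lambda>x. Join (Z x)) ` X = (\<lambda>x. x) ` X"
    by (rule image_cong[OF refl]) (use Z in metis)
  then have "a = Join ((\<lambda>x. Join (Z x)) ` X)" using X(2) by simp
  also have "\<dots> = Join (\<Union>x\<in>X. Z x)"
    by (rule Join_UN[OF joins_module X(1), symmetric]) (use Z in blast)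
  finally have "a = Join (\<Union>x\<in>X. Z x)" .
  moreover have "scaled_le act F z c" if "x \<in> X" "z \<in> Z x" for x z
  proof (rule scaled_le_antimono)
    show "scaled_le act F x c" using X(3) that(1) by blast
    have "z \<le> Join (Z x)" by (rule Join_upper[OF joins_module that(2)])
    also have "Join (Z x) = x" using Z that(1) by metis
    finally show "z \<le> x" .
  qed
  moreover have "(\<Union>x\<in>X. Z x) \<noteq> {}" using X(1) Z by blast
  ultimately show ?thesis using Z by (intro exI[of _ "\<Union>x\<in>X. Z x"]) blast
qed

lemma prec1_Int_cover:
  assumes F: "mfilter mul one F" and G: "mfilter mul one G"
    and "prec1 act F a c" and "prec1 act G a d"
  shows "\<exists>P. P \<noteq> {} \<and> prec1 act (F \<inter> G) a (Join P) \<and>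
           (\<forall>p\<in>P. p \<le> a \<and> (p \<le> c \<or> p \<le> d))"
proof -
  obtain Y where Y: "Y \<noteq> {}" "a = Join Y" "\<forall>y\<in>Y. scaled_le act F y c \<and> scaled_le act G y d"
    using prec1_common_refinement[OF assms] by blast
  obtain s t where s: "\<forall>y\<in>Y. s y \<in> F \<and> act (s y) y \<le> c"
    and t: "\<forall>y\<in>Y. t y \<in> G \<and> act (t y) y \<le> d"
    using Y(3) unfolding scaled_le_def by metis
  define P where "P = (\<lambda>y. act (s y) y) ` Y \<union> (\<lambda>y. act (t y) y) ` Y"
  have below_a: "act r y \<le> a" if "y \<in> Y" for r y
    using act_le Join_upper[OF joins_module that] Y(2) order_trans by metis
  have "\<forall>p\<in>P. p \<le> a \<and> (p \<le> c \<or> p \<le> d)"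
  proof
    fix p assume "p \<in> P"
    then obtain y r where "y \<in> Y" "p = act r y" "p \<le> c \<or> p \<le> d"
      using s t unfolding P_def by blast
    then show "p \<le> a \<and> (p \<le> c \<or> p \<le> d)" using below_a by blast
  qed
  moreover have "prec1 act (F \<inter> G) a (Join P)"
    unfolding prec1_iff_scaled_le
  proof (intro exI conjI ballI)
    show "Y \<noteq> {}" "a \<le> Join Y" using Y by auto
    fix y assume "y \<in> Y"
    then show "scaled_le act (F \<inter> G) y (Join P)"
      using s t Join_upper[OF joins_module] by (intro scaled_le_Int[OF F G]) (auto simp: P_def)
  qed
  moreover have "P \<noteq> {}" using Y(1) unfolding P_def by blast
  ultimately show ?thesis by (intro exI[of _ P]) blast
qed

theorem prec_le_Int:
  assumes F: "mfilter mul one F" and G: "mfilter mul one G"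
  shows "prec_le act F n a b \<Longrightarrow> prec_le act G m a b \<Longrightarrow>
           prec_le act (F \<inter> G) (n + m - 1) a b"
proof (induction "n + m" arbitrary: n m a b rule: less_induct)
  case less
  have one: "one \<in> F \<inter> G" using F G unfolding mfilter_def by blast
  show ?case
  proof (cases "n = 0 \<or> m = 0")
    case True
    then have "a \<le> b" using less.prems by auto
    then show ?thesis by (rule prec_le_refl[OF one])
  next
    case False
    then obtain n' m' where nm: "n = Suc n'" "m = Suc m'" by (meson not0_implies_Suc)
    obtain c d where c: "prec1 act F a c" "prec_le act F n' c b"
      and d: "prec1 act G a d" "prec_le act G m' d b"
      using less.prems unfolding nm prec_le_Suc by blast
    obtain P where P: "P \<noteq> {}" "prec1 act (F \<inter> G) a (Join P)"
      and pieces: "\<forall>p\<in>P. p \<le> a \<and> (p \<le> c \<or> p \<le> d)"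
      using prec1_Int_cover[OF F G c(1) d(1)] by blast
    have "prec_le act (F \<inter> G) (n' + m') p b" if "p \<in> P" for p
    proof -
      have "p \<le> a" using pieces that by blast
      note a_side = less.prems[THEN prec_le_antimono[OF \<open>p \<le> a\<close>]]
      have "p \<le> c \<or> p \<le> d" using pieces that by blast
      then show ?thesis
      proof
        assume "p \<le> c"
        then have "prec_le act F n' p b" using c(2) by (rule prec_le_antimono)
        then show ?thesis using less.hyps[of n' m p b] a_side(2) nm by simp
      next
        assume "p \<le> d"
        then have "prec_le act G m' p b" using d(2) by (rule prec_le_antimono)
        then show ?thesis using less.hyps[of n m' p b] a_side(1) nm by simp
      qed
    qed
    then have "prec_le act (F \<inter> G) (n' + m') (Join P) b" using prec_le_Join[OF P(1)] by blast
    then have "prec_le act (F \<inter> G) (Suc (n' + m')) a b" using P(2) unfolding prec_le_Suc by blast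
    then show ?thesis using nm by simp
  qed
qed

end

theorem mainTheorem4:
  fixes mul :: "'q::order \<Rightarrow> 'q \<Rightarrow> 'q" and one :: 'q
    and act :: "'q \<Rightarrow> 'm::order \<Rightarrow> 'm"
    and F G :: "'q set" and a b :: 'm and n m :: nat
  assumes "quantale mul one"
    and "qmodule mul one act"
    and "shrinkable TYPE('m)"
    and "mfilter mul one F" and "mfilter mul one G"
    and "n \<ge> 1" and "m \<ge> 1"
    and "precn act F n a b" and "precn act G m a b"
  shows "precn act (F \<inter> G) (n + m - 1) a b"
proof -
  interpret shrinkable_quantale_module mul one act
    using assms(1-3) by unfold_locales
  show ?thesis
    using prec_le_Int[OF assms(4,5)] assms(6-9) by (simp add: precn_eq_prec_le)
qed

end
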